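(* Let $R$ be a commutative ring and let $G=\{g_1=e,g_2,\dots,g_n\}$ be a finite group of order $n>1$ with this fixed listing of its elements. Then $\sigma(v)$ is symmetric for every $v\in RG$ if and only if $G$ is an abelian group of exponent $2$.
   Context: For $v=\sum_{g\in G}\alpha_g g\in RG$, $\sigma(v)$ is the $n\times n$ matrix over $R$ whose $(i,j)$ entry is $\alpha_{g_i^{-1}g_j}$. *)

theory Defs
  imports "HOL-Algebra.Algebra"
begin

text \<open>An element v of the group ring RG (G finite) is a coefficient function
  v : G \<rightarrow> R, v = sum of v(g) g.\<close>

definition group_ring_sigma ::
  "('a, 'b) monoid_scheme \<Rightarrow> (nat \<Rightarrow> 'a) \<Rightarrow> ('a \<Rightarrow> 'r) \<Rightarrow> nat \<Rightarrow> nat \<Rightarrow> 'r" where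
  "group_ring_sigma G g v i j = v (inv\<^bsub>G\<^esub> (g i) \<otimes>\<^bsub>G\<^esub> g j)"

definition symmetric_matrix :: "nat \<Rightarrow> (nat \<Rightarrow> nat \<Rightarrow> 'r) \<Rightarrow> bool" where
  "symmetric_matrix n M \<longleftrightarrow> (\<forall>i\<in>{1..n}. \<forall>j\<in>{1..n}. M i j = M j i)"

definition group_exponent :: "('a, 'b) monoid_scheme \<Rightarrow> nat" where
  "group_exponent G = (LEAST m. 0 < m \<and> (\<forall>x\<in>carrier G. x [^]\<^bsub>G\<^esub> m = \<one>\<^bsub>G\<^esub>))"

end

theory Submission
  imports Defs "HOL-Algebra.Multiplicative_Group"
begin

text \<open>The (j,i) entry of \<open>\<sigma>(v)\<close> is v evaluated at the inverse of the argument of the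
  (i,j) entry, and every group element occurs as such an argument. Hence \<open>\<sigma>(v)\<close> is
  symmetric for every v exactly when every element of G is its own inverse. Such a group is
  abelian, and when it is nontrivial its exponent is 2.\<close>

lemma (in group) inv_eq_self_iff_square_one:
  "x \<in> carrier G \<Longrightarrow> inv x = x \<longleftrightarrow> x \<otimes> x = \<one>"
  by (metis inv_equality r_inv)

lemma (in group) comm_group_if_square_one:
  assumes "\<And>x. x \<in> carrier G \<Longrightarrow> x \<otimes> x = \<one>"
  shows "comm_group G"
proof (rule group_comm_groupI)
  fix x y assume xy: "x \<in> carrier G" "y \<in> carrier G"
  have inv_self: "inv z = z" if "z \<in> carrier G" for z
    using assms that inv_eq_self_iff_square_one by blast
  have "x \<otimes> y = inv (x \<otimes> y)" using inv_self xy by simp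
  also have "\<dots> = inv y \<otimes> inv x" using xy by (simp add: inv_mult_group)
  also have "\<dots> = y \<otimes> x" using inv_self xy by simp
  finally show "x \<otimes> y = y \<otimes> x" .
qed

lemma (in group) group_exponent_eq_2_iff:
  assumes "finite (carrier G)"
  shows "group_exponent G = 2 \<longleftrightarrow> carrier G \<noteq> {\<one>} \<and> (\<forall>x\<in>carrier G. x \<otimes> x = \<one>)"
proof -
  let ?P = "\<lambda>m::nat. 0 < m \<and> (\<forall>x\<in>carrier G. x [^] m = \<one>)"
  have exponent_eq_Least: "group_exponent G = (LEAST m. ?P m)"
    unfolding group_exponent_def ..
  have "?P (order G)"
    using assms pow_order_eq_1 order_gt_0_iff_finite by simp
  then have P_exponent: "?P (group_exponent G)"
    unfolding exponent_eq_Least by (rule LeastI)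
  have "?P 1 \<longleftrightarrow> (\<forall>x\<in>carrier G. x = \<one>)"
    by (simp add: One_nat_def)
  also have "\<dots> \<longleftrightarrow> carrier G = {\<one>}"
    using one_closed by blast
  finally have P_1_iff: "?P 1 \<longleftrightarrow> carrier G = {\<one>}" .
  have P_2_iff: "?P 2 \<longleftrightarrow> (\<forall>x\<in>carrier G. x \<otimes> x = \<one>)"
    by (simp add: numeral_2_eq_2)
  show ?thesis
  proof
    assume exp: "group_exponent G = 2"
    have "\<not> ?P 1"
      using exp not_less_Least[of 1 ?P] unfolding exponent_eq_Least by linarith
    then show "carrier G \<noteq> {\<one>} \<and> (\<forall>x\<in>carrier G. x \<otimes> x = \<one>)"
      using P_exponent P_1_iff P_2_iff unfolding exp by blast
  next
    assume nontrivial_involutive: "carrier G \<noteq> {\<one>} \<and> (\<forall>x\<in>carrier G. x \<otimes> x = \<one>)"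
    show "group_exponent G = 2"
      unfolding exponent_eq_Least
    proof (rule Least_equality)
      show "?P 2"
        using nontrivial_involutive P_2_iff by blast
      fix m assume "?P m"
      moreover have "m \<noteq> 1"
        using nontrivial_involutive P_1_iff calculation by blast
      ultimately show "2 \<le> m" by linarith
    qed
  qed
qed

lemma (in group) symmetric_group_ring_sigma_iff:
  assumes "g ` {1..n} = carrier G"
  shows "symmetric_matrix n (group_ring_sigma G g v) \<longleftrightarrow> (\<forall>x\<in>carrier G. v (inv x) = v x)"
proof
  assume sym: "symmetric_matrix n (group_ring_sigma G g v)"
  show "\<forall>x\<in>carrier G. v (inv x) = v x"
  proof
    fix x assume x: "x \<in> carrier G"
    obtain i where i: "i \<in> {1..n}" "g i = \<one>"
      using one_closed unfolding assms[symmetric] by (rule imageE) simp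
    obtain j where j: "j \<in> {1..n}" "g j = x"
      using x unfolding assms[symmetric] by (rule imageE) simp
    have "group_ring_sigma G g v i j = group_ring_sigma G g v j i"
      using sym i(1) j(1) unfolding symmetric_matrix_def by blast
    then show "v (inv x) = v x"
      using x unfolding group_ring_sigma_def i(2) j(2) by simp
  qed
next
  assume v_inv: "\<forall>x\<in>carrier G. v (inv x) = v x"
  show "symmetric_matrix n (group_ring_sigma G g v)"
    unfolding symmetric_matrix_def group_ring_sigma_def
  proof (intro ballI)
    fix i j assume "i \<in> {1..n}" "j \<in> {1..n}"
    then have gij: "g i \<in> carrier G" "g j \<in> carrier G"
      unfolding assms[symmetric] by simp_all
    then have "inv (g j) \<otimes> g i = inv (inv (g i) \<otimes> g j)"
      by (simp add: inv_mult_group)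
    then show "v (inv (g i) \<otimes> g j) = v (inv (g j) \<otimes> g i)"
      using v_inv gij by simp
  qed
qed

lemma (in group) all_symmetric_group_ring_sigma_iff:
  assumes "g ` {1..n} = carrier G"
  shows "(\<forall>v :: 'a \<Rightarrow> 'r :: zero_neq_one. symmetric_matrix n (group_ring_sigma G g v))
         \<longleftrightarrow> (\<forall>x\<in>carrier G. inv x = x)"
  unfolding symmetric_group_ring_sigma_iff[OF assms]
proof
  assume all_inv: "\<forall>v :: 'a \<Rightarrow> 'r. \<forall>x\<in>carrier G. v (inv x) = v x"
  show "\<forall>x\<in>carrier G. inv x = x"
  proof
    fix x assume x: "x \<in> carrier G"
    have "(if inv x = x then 1 else 0 :: 'r) = 1"
      using spec[OF all_inv, of "\<lambda>y. if y = x then 1 else 0"] x by simp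
    then show "inv x = x"
      by (simp split: if_splits)
  qed
qed simp

theorem mainTheorem4:
  fixes G :: "('a, 'b) monoid_scheme"
    and g :: "nat \<Rightarrow> 'a"
    and n :: nat
  assumes "group G"
    and "finite (carrier G)"
    and "order G = n"
    and "n > 1"
    and "bij_betw g {1..n} (carrier G)"
    and "g 1 = \<one>\<^bsub>G\<^esub>"
  shows "(\<forall>v :: 'a \<Rightarrow> 'r :: comm_ring_1. symmetric_matrix n (group_ring_sigma G g v))
         \<longleftrightarrow> (comm_group G \<and> group_exponent G = 2)"
proof -
  interpret group G by fact
  have listing: "g ` {1..n} = carrier G"
    using assms(5) by (rule bij_betw_imp_surj_on)
  have nontrivial: "carrier G \<noteq> {\<one>\<^bsub>G\<^esub>}"
    using assms(3,4) unfolding order_def by auto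
  have "(\<forall>v :: 'a \<Rightarrow> 'r. symmetric_matrix n (group_ring_sigma G g v))
        \<longleftrightarrow> (\<forall>x\<in>carrier G. inv\<^bsub>G\<^esub> x = x)"
    using listing by (rule all_symmetric_group_ring_sigma_iff)
  also have "\<dots> \<longleftrightarrow> (\<forall>x\<in>carrier G. x \<otimes>\<^bsub>G\<^esub> x = \<one>\<^bsub>G\<^esub>)"
    using inv_eq_self_iff_square_one by simp
  also have "\<dots> \<longleftrightarrow> comm_group G \<and> group_exponent G = 2"
    using comm_group_if_square_one group_exponent_eq_2_iff[OF assms(2)] nontrivial by blast
  finally show ?thesis .
qed

end
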